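(* Let $H$ be a digraph (possibly with loops), let $D$ be an $H$-colored quasi-transitive digraph, let $k \geq 4$, and let $u,v$ be distinct vertices of $D$. If there exists a directed $uv$-walk in $D$, then either $u$ and $v$ are adjacent in $D$, or $(v,u)$ is a symmetric arc of $C_{H}^{k-1}(D)$ (that is, both $(u,v)$ and $(v,u)$ are arcs of $C_{H}^{k-1}(D)$).
   Context: All digraphs are finite. A digraph $D$ is quasi-transitive if for all distinct $u,v\in V(D)$, whenever there is a directed $uv$-path of length $2$, $u$ and $v$ are joined by an arc (in some direction). Two vertices are adjacent if there is an arc between them. $D$ has no loops and comes with a map $\rho: A(D)\to V(H)$. For a walk $W=(x_0,\ldots,x_n)$ in $D$, there is an obstruction on $x_i$ if $(\rho(x_{i-1},x_i),\rho(x_i,x_{i+1})) \notin A(H)$; for an open walk this is considered at internal vertices $x_i$, $1\le i\le n-1$, for a closed walk at all $i\in\{0,\ldots,n-1\}$ with indices modulo $n$. $O_H(W)$ is the set of indices with an obstruction; the $H$-length is $l_H(W)=|O_H(W)|+1$ for open $W$ and $|O_H(W)|$ for closed $W$. The $(k-1,H)$-closure $C_H^{k-1}(D)$ is the digraph on $V(D)$ in which $(x,y)$ is an arc iff there is a directed $xy$-path in $D$ of $H$-length at most $k-1$. *)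

theory Defs
  imports Main
begin

definition digraph :: "'a set \<Rightarrow> ('a \<times> 'a) set \<Rightarrow> bool" where
  "digraph V A \<longleftrightarrow> finite V \<and> A \<subseteq> V \<times> V"

definition loopless :: "('a \<times> 'a) set \<Rightarrow> bool" where
  "loopless A \<longleftrightarrow> (\<forall>x. (x, x) \<notin> A)"

definition H_colored :: "('a \<times> 'a) set \<Rightarrow> 'c set \<Rightarrow> (('a \<times> 'a) \<Rightarrow> 'c) \<Rightarrow> bool" where
  "H_colored A VH rho \<longleftrightarrow> (\<forall>e\<in>A. rho e \<in> VH)"

definition quasi_transitive :: "'a set \<Rightarrow> ('a \<times> 'a) set \<Rightarrow> bool" where
  "quasi_transitive V A \<longleftrightarrow>
     (\<forall>u\<in>V. \<forall>v\<in>V. \<forall>w\<in>V. u \<noteq> v \<and> u \<noteq> w \<and> w \<noteq> v \<and> (u, w) \<in> A \<and> (w, v) \<in> A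
        \<longrightarrow> (u, v) \<in> A \<or> (v, u) \<in> A)"

definition adjacent :: "('a \<times> 'a) set \<Rightarrow> 'a \<Rightarrow> 'a \<Rightarrow> bool" where
  "adjacent A u v \<longleftrightarrow> (u, v) \<in> A \<or> (v, u) \<in> A"

definition dwalk :: "('a \<times> 'a) set \<Rightarrow> 'a list \<Rightarrow> bool" where
  "dwalk A xs \<longleftrightarrow> xs \<noteq> [] \<and> (\<forall>i. Suc i < length xs \<longrightarrow> (xs ! i, xs ! Suc i) \<in> A)"

definition dpath :: "('a \<times> 'a) set \<Rightarrow> 'a list \<Rightarrow> bool" where
  "dpath A xs \<longleftrightarrow> dwalk A xs \<and> distinct xs"

definition obstructions :: "('c \<times> 'c) set \<Rightarrow> (('a \<times> 'a) \<Rightarrow> 'c) \<Rightarrow> 'a list \<Rightarrow> nat set" where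
  "obstructions AH rho xs = {i. 1 \<le> i \<and> Suc i < length xs \<and>
      (rho (xs ! (i - 1), xs ! i), rho (xs ! i, xs ! Suc i)) \<notin> AH}"

definition H_length :: "('c \<times> 'c) set \<Rightarrow> (('a \<times> 'a) \<Rightarrow> 'c) \<Rightarrow> 'a list \<Rightarrow> nat" where
  "H_length AH rho xs = card (obstructions AH rho xs) + 1"

text \<open>Arc (x,y) of the (k-1,H)-closure C_H^{k-1}(D): there is a directed xy-path
 in D (with at least one arc) of H-length at most k-1.\<close>
definition closure_arc ::
  "('a \<times> 'a) set \<Rightarrow> ('c \<times> 'c) set \<Rightarrow> (('a \<times> 'a) \<Rightarrow> 'c) \<Rightarrow> nat \<Rightarrow> 'a \<Rightarrow> 'a \<Rightarrow> bool" where
  "closure_arc A AH rho k x y \<longleftrightarrow>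
     (\<exists>p. dpath A p \<and> length p \<ge> 2 \<and> hd p = x \<and> last p = y \<and> H_length AH rho p \<le> k - 1)"

end

theory Submission
  imports Defs
begin

text \<open>A shortest \<open>uv\<close>-walk \<open>x\<^sub>0 \<dots> x\<^sub>n\<close> is a path without forward chords \<open>x\<^sub>i \<rightarrow> x\<^sub>j\<close>, \<open>j \<ge> i + 2\<close>.
  Quasi-transitivity turns the 2-paths \<open>x\<^sub>i x\<^sub>i\<^sub>+\<^sub>1 x\<^sub>i\<^sub>+\<^sub>2\<close> into backward arcs \<open>x\<^sub>i\<^sub>+\<^sub>2 \<rightarrow> x\<^sub>i\<close>, and
  once \<open>n \<ge> 4\<close> these propagate to backward arcs \<open>x\<^sub>j \<rightarrow> x\<^sub>i\<close> for all \<open>j \<ge> i + 2\<close>, in particular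
  \<open>v \<rightarrow> u\<close>. Hence for nonadjacent \<open>u, v\<close> the shortest walk is \<open>u a b v\<close> with \<open>v \<rightarrow> a\<close> and
  \<open>b \<rightarrow> u\<close>, so \<open>u a b v\<close> and \<open>v a b u\<close> are paths on four vertices. Such a path has at most
  two obstructions, hence \<open>H\<close>-length at most \<open>3 \<le> k - 1\<close>, whatever the colouring.\<close>

lemma dwalk_iff_successively:
  "dwalk A xs \<longleftrightarrow> xs \<noteq> [] \<and> successively (\<lambda>x y. (x, y) \<in> A) xs"
  unfolding dwalk_def successively_conv_nth by blast

lemma dwalk_arc:
  assumes "dwalk A xs" "Suc i < length xs"
  shows "(xs ! i, xs ! Suc i) \<in> A"
  using assms unfolding dwalk_def by blast

lemma dwalk_take:
  assumes "dwalk A xs" "i < length xs"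
  shows "dwalk A (take (Suc i) xs)"
  using assms successively_append_iff[of _ "take (Suc i) xs" "drop (Suc i) xs"]
  by (auto simp: dwalk_iff_successively)

lemma dwalk_shortcut:
  assumes "dwalk A xs" "i < j" "j < length xs" "(xs ! i, xs ! j) \<in> A"
  shows "dwalk A (take (Suc i) xs @ drop j xs)"
proof -
  let ?P = "\<lambda>x y. (x, y) \<in> A"
  have "successively ?P (take (Suc i) xs)" "successively ?P (drop j xs)"
    using assms(1) successively_append_iff[of ?P "take (Suc i) xs" "drop (Suc i) xs"]
      successively_append_iff[of ?P "take j xs" "drop j xs"]
    by (auto simp: dwalk_iff_successively)
  moreover have "last (take (Suc i) xs) = xs ! i" "hd (drop j xs) = xs ! j"
    using assms(2,3) by (simp_all add: take_Suc_conv_app_nth hd_drop_conv_nth)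
  ultimately show ?thesis
    using assms(3,4) by (simp add: dwalk_iff_successively successively_append_iff)
qed

definition shortest_walk :: "('a \<times> 'a) set \<Rightarrow> 'a \<Rightarrow> 'a \<Rightarrow> 'a list \<Rightarrow> bool" where
  "shortest_walk A u v W \<longleftrightarrow> dwalk A W \<and> hd W = u \<and> last W = v \<and>
     (\<forall>W'. dwalk A W' \<and> hd W' = u \<and> last W' = v \<longrightarrow> length W \<le> length W')"

lemma shortest_walkD:
  assumes "shortest_walk A u v W"
  shows "dwalk A W" "hd W = u" "last W = v"
  using assms unfolding shortest_walk_def by auto

lemma shortest_walk_exists:
  assumes "dwalk A W" "hd W = u" "last W = v"
  shows "\<exists>W. shortest_walk A u v W"
  using ex_has_least_nat[of "\<lambda>W. dwalk A W \<and> hd W = u \<and> last W = v" W length] assms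
  unfolding shortest_walk_def by blast

lemma shortest_walk_no_forward_chord:
  assumes "shortest_walk A u v W" "i + 2 \<le> j" "j < length W"
  shows "(W ! i, W ! j) \<notin> A"
proof
  note walk = shortest_walkD[OF assms(1)]
  assume "(W ! i, W ! j) \<in> A"
  then have "dwalk A (take (Suc i) W @ drop j W)"
    using dwalk_shortcut[OF walk(1)] assms(2,3) by simp
  moreover have "hd (take (Suc i) W @ drop j W) = u" "last (take (Suc i) W @ drop j W) = v"
    using walk assms(2,3) by (auto simp: hd_append)
  ultimately have "length W \<le> length (take (Suc i) W @ drop j W)"
    using assms(1) unfolding shortest_walk_def by blast
  then show False using assms(2,3) by simp
qed

lemma shortest_walk_distinct:
  assumes "shortest_walk A u v W"
  shows "distinct W"
proof -
  note walk = shortest_walkD[OF assms]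
  have "W ! i \<noteq> W ! j" if ij: "i < j" "j < length W" for i j
  proof
    assume eq: "W ! i = W ! j"
    consider "Suc j < length W" | "Suc j = length W"
      using ij by linarith
    then show False
    proof cases
      case 1
      have "(W ! i, W ! Suc j) \<in> A"
        using dwalk_arc[OF walk(1) 1] eq by simp
      then show False
        using shortest_walk_no_forward_chord[OF assms, of i "Suc j"] 1 ij by simp
    next
      case 2
      have "last W = W ! j"
        using 2 by (metis diff_Suc_1 last_conv_nth list.size(3) nat.distinct(1))
      then have "last (take (Suc i) W) = v"
        using walk(3) eq ij 2 by (simp add: take_Suc_conv_app_nth)
      moreover have "hd (take (Suc i) W) = u"
        using walk(2) by (simp add: hd_take)
      moreover have "dwalk A (take (Suc i) W)"
        using dwalk_take[OF walk(1)] ij by simp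
      ultimately have "length W \<le> length (take (Suc i) W)"
        using assms unfolding shortest_walk_def by blast
      then show False using 2 ij by simp
    qed
  qed
  then show ?thesis
    unfolding distinct_conv_nth by (metis linorder_neq_iff)
qed

text \<open>Loops do no harm: if \<open>y\<close> coincides with \<open>x\<close> or \<open>z\<close>, one of the two arcs joins \<open>x\<close> and \<open>z\<close>.\<close>

lemma quasi_transitive_adjacent:
  assumes "A \<subseteq> V \<times> V" "quasi_transitive V A" "(x, y) \<in> A" "(y, z) \<in> A" "x \<noteq> z"
  shows "adjacent A x z"
proof (cases "y = x \<or> y = z")
  case True
  then show ?thesis using assms(3,4) unfolding adjacent_def by blast
next
  case False
  have "x \<in> V" "y \<in> V" "z \<in> V" using assms(1,3,4) by blast+
  then show ?thesis
    using assms(2)[unfolded quasi_transitive_def, rule_format, of x z y] assms(3-5) False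
    unfolding adjacent_def by blast
qed

locale qt_shortest_walk =
  fixes V :: "'a set" and A :: "('a \<times> 'a) set" and u v :: 'a and W :: "'a list"
  assumes arcs: "A \<subseteq> V \<times> V" and qt: "quasi_transitive V A"
    and shortest: "shortest_walk A u v W"
begin

lemma walk_arc:
  assumes "Suc i < length W"
  shows "(W ! i, W ! Suc i) \<in> A"
  using dwalk_arc[OF shortest_walkD(1)[OF shortest] assms] .

lemma backward_chord_through:
  assumes "i + 2 \<le> j" "j < length W" "(W ! j, x) \<in> A" "(x, W ! i) \<in> A"
  shows "(W ! j, W ! i) \<in> A"
proof -
  have "W ! j \<noteq> W ! i"
    using shortest_walk_distinct[OF shortest] assms(1,2) by (simp add: nth_eq_iff_index_eq)
  then have "adjacent A (W ! j) (W ! i)"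
    using quasi_transitive_adjacent[OF arcs qt assms(3,4)] by blast
  then show ?thesis
    using shortest_walk_no_forward_chord[OF shortest assms(1,2)] unfolding adjacent_def by blast
qed

lemma backward_chord_2:
  assumes "i + 2 < length W"
  shows "(W ! (i + 2), W ! i) \<in> A"
proof -
  have "(W ! i, W ! Suc i) \<in> A" "(W ! Suc i, W ! (i + 2)) \<in> A"
    using walk_arc[of i] walk_arc[of "Suc i"] assms by simp_all
  moreover have "W ! i \<noteq> W ! (i + 2)"
    using shortest_walk_distinct[OF shortest] assms by (simp add: nth_eq_iff_index_eq)
  ultimately have "adjacent A (W ! i) (W ! (i + 2))"
    using quasi_transitive_adjacent[OF arcs qt] by blast
  then show ?thesis
    using shortest_walk_no_forward_chord[OF shortest, of i "i + 2"] assms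
    unfolding adjacent_def by auto
qed

lemma backward_chord_4:
  assumes "i + 4 < length W"
  shows "(W ! (i + 4), W ! i) \<in> A"
proof -
  have "(W ! (i + 4), W ! (i + 2)) \<in> A"
    using backward_chord_2[of "i + 2"] assms by (simp add: numeral_eq_Suc)
  then show ?thesis
    using backward_chord_through[of i "i + 4"] backward_chord_2[of i] assms by simp
qed

text \<open>Only here is \<open>5 \<le> length W\<close> needed: the 2-path closing a chord of length 3 runs through
  a vertex just outside it, \<open>W ! (i + 4)\<close> or \<open>W ! (i - 1)\<close>.\<close>

lemma backward_chord_3:
  assumes "5 \<le> length W" "i + 3 < length W"
  shows "(W ! (i + 3), W ! i) \<in> A"
proof (cases "i + 4 < length W")
  case True
  have "(W ! (i + 3), W ! (i + 4)) \<in> A"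
    using walk_arc[of "i + 3"] True by (simp add: numeral_eq_Suc)
  then show ?thesis
    using backward_chord_through[of i "i + 3"] backward_chord_4 True by simp
next
  case False
  then obtain h where h: "i = Suc h" "h + 4 = i + 3"
    using assms by (cases i) auto
  have "(W ! (i + 3), W ! h) \<in> A"
    using backward_chord_4[of h, unfolded h(2)] assms(2) by simp
  moreover have "(W ! h, W ! i) \<in> A"
    using walk_arc[of h] h assms(2) by simp
  ultimately show ?thesis
    using backward_chord_through[of i "i + 3"] assms(2) by simp
qed

lemma backward_chords:
  assumes "5 \<le> length W" "i + 2 \<le> j" "j < length W"
  shows "(W ! j, W ! i) \<in> A"
  using assms(2,3)
proof (induction j rule: less_induct)
  case (less j)
  consider "j = i + 2" | "j = i + 3" | "i + 4 \<le> j"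
    using less.prems(1) by linarith
  then show ?case
  proof cases
    case 1
    then show ?thesis using backward_chord_2 less.prems by simp
  next
    case 2
    then show ?thesis using backward_chord_3 assms(1) less.prems by simp
  next
    case 3
    have "j - 2 + 2 = j" using 3 by linarith
    then have "(W ! j, W ! (j - 2)) \<in> A"
      using backward_chord_2[of "j - 2"] less.prems by simp
    moreover have "(W ! (j - 2), W ! i) \<in> A"
      using less.IH[of "j - 2"] 3 less.prems by simp
    ultimately show ?thesis
      using backward_chord_through less.prems by blast
  qed
qed

lemma shortest_walk_between_nonadjacent:
  assumes "u \<noteq> v" "\<not> adjacent A u v"
  shows "\<exists>a b. W = [u, a, b, v] \<and> (v, a) \<in> A \<and> (b, u) \<in> A"
proof -
  have W: "W \<noteq> []" "W ! 0 = u" "W ! (length W - 1) = v"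
    using shortest_walkD[OF shortest] unfolding dwalk_def by (auto simp: hd_conv_nth last_conv_nth)
  have "length W \<noteq> 1" using W assms(1) by auto
  moreover have "length W \<noteq> 2"
    using walk_arc[of 0] W assms(2) unfolding adjacent_def by auto
  moreover have "length W \<noteq> 3"
    using backward_chord_2[of 0] W assms(2) unfolding adjacent_def by (auto simp: numeral_eq_Suc)
  moreover have "\<not> 5 \<le> length W"
  proof
    assume "5 \<le> length W"
    then have "(W ! (length W - 1), W ! 0) \<in> A"
      using backward_chords[of 0 "length W - 1"] by simp
    then show False using W assms(2) unfolding adjacent_def by simp
  qed
  ultimately have "length W = 4"
    using W(1) by (simp flip: length_greater_0_conv)
  then have "W = [u, W ! 1, W ! 2, v]"
    using W by (intro nth_equalityI) (auto simp: less_Suc_eq nth_Cons' numeral_eq_Suc)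
  moreover have "(v, W ! 1) \<in> A" "(W ! 2, u) \<in> A"
    using backward_chord_2[of 0] backward_chord_2[of 1] W \<open>length W = 4\<close>
    by (simp_all add: numeral_eq_Suc)
  ultimately show ?thesis by blast
qed

end

lemma H_length_le_length:
  assumes "2 \<le> length xs"
  shows "H_length AH rho xs \<le> length xs - 1"
proof -
  have "obstructions AH rho xs \<subseteq> {1..<length xs - 1}"
    unfolding obstructions_def by auto
  then have "card (obstructions AH rho xs) \<le> card {1..<length xs - 1}"
    by (intro card_mono) simp_all
  then show ?thesis
    unfolding H_length_def using assms by simp
qed

lemma closure_arc_if_dpath:
  assumes "dpath A p" "2 \<le> length p" "length p \<le> k"
  shows "closure_arc A AH rho k (hd p) (last p)"
  unfolding closure_arc_def
  using assms H_length_le_length[OF assms(2), of AH rho] by (intro exI[of _ p]) auto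

theorem lemma15:
  fixes V :: "'a set" and A :: "('a \<times> 'a) set"
    and VH :: "'c set" and AH :: "('c \<times> 'c) set"
    and rho :: "('a \<times> 'a) \<Rightarrow> 'c" and k :: nat and u v :: 'a
  assumes "digraph V A" and "loopless A"
    and "AH \<subseteq> VH \<times> VH"
    and "H_colored A VH rho"
    and "quasi_transitive V A"
    and "k \<ge> 4"
    and "u \<in> V" and "v \<in> V" and "u \<noteq> v"
    and "\<exists>W. dwalk A W \<and> hd W = u \<and> last W = v"
  shows "adjacent A u v \<or> (closure_arc A AH rho k u v \<and> closure_arc A AH rho k v u)"
proof (cases "adjacent A u v")
  case False
  obtain W where shortest: "shortest_walk A u v W"
    using assms(10) shortest_walk_exists by metis
  have "A \<subseteq> V \<times> V" using assms(1) unfolding digraph_def by blast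
  then interpret qt_shortest_walk V A u v W
    using assms(5) shortest by unfold_locales
  obtain a b where W: "W = [u, a, b, v]" "(v, a) \<in> A" "(b, u) \<in> A"
    using shortest_walk_between_nonadjacent assms(9) False by blast
  have "dwalk A [u, a, b, v]" "distinct [u, a, b, v]"
    using shortest_walkD(1)[OF shortest] shortest_walk_distinct[OF shortest] W(1) by simp_all
  then have uv: "dpath A [u, a, b, v]" and vu: "dpath A [v, a, b, u]"
    using W by (auto simp: dpath_def dwalk_iff_successively)
  have "closure_arc A AH rho k u v"
    using closure_arc_if_dpath[OF uv, of k AH rho] assms(6) by simp
  moreover have "closure_arc A AH rho k v u"
    using closure_arc_if_dpath[OF vu, of k AH rho] assms(6) by simp
  ultimately show ?thesis by simp
qed simp

end
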